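(* In the setting described in the context, let $\beta_t$ ($t\ge 1$) denote the policy computed by LPSM at slot $t$. Then $$\mathbb{E}\Big[\,1+\sum_{t=1}^{\infty}\mathbb{I}\{\beta_t\neq\beta^*\}\Big]\;\le\;1+\frac{(1+A)\,S}{e^{\frac12\left(\frac{\Delta_1}{B_0}\right)^2}-1},$$ i.e. the expected number of slots in which LPSM plays a non-optimal policy (counting slot $0$, where an arbitrary action is played) is at most this quantity.
   Context: Setting (MDP with unknown mean rewards). $\mathcal{S}$ is a finite state space and $\mathcal{A}$ a finite action set, with $S=|\mathcal{S}|$, $A=|\mathcal{A}|$; for each $s\in\mathcal{S}$ a nonempty set $\mathcal{A}_s\subseteq\mathcal{A}$ of allowed actions is given. The transition probabilities $P(s'\mid s,a)$ are known to the agent. The MDP is ergodic: every deterministic stationary policy $\beta:\mathcal{S}\to\mathcal{A}$ with $\beta(s)\in\mathcal{A}_s$ induces an irreducible aperiodic Markov chain; let $\pi_\beta$ be its stationary distribution. Let $X_0,X_1,\dots$ be i.i.d. random variables with support $\mathcal{X}$. If at slot $t$ the state is $s_t$ and action $a_t\in\mathcal{A}_{s_t}$ is taken, the agent receives reward $r_t=f(s_t,a_t,X_t)$, where the function $f$ is known to the agent, the next state $s_{t+1}$ is drawn from $P(\cdot\mid s_t,a_t)$, and after slot $t$ the agent learns the realization $x_t$ of $X_t$. The initial state $s_0$ is arbitrary. Let $\mu(s,a)=\mathbb{E}[f(s,a,X)]$ and let $\mathbf{M}$ be the matrix with entries $\mu(s,a)$. For any matrix $\Theta$ with entries $\Theta(s,a)$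 and policy $\beta$, set $\rho(\beta,\Theta)=\sum_{s\in\mathcal{S}}\pi_\beta(s)\Theta(s,\beta(s))$. Let $\beta^*$ be an optimal deterministic stationary policy, $\rho^*=\rho(\beta^*,\mathbf{M})=\max_\beta\rho(\beta,\mathbf{M})$, and $\Delta_1=\rho^*-\max_{\beta\neq\beta^*}\rho(\beta,\mathbf{M})$. Let $B(s,a)\ge\sup_{x\in\mathcal{X}}f(s,a,x)-\inf_{x\in\mathcal{X}}f(s,a,x)$ and $B_0=\max_{(s,a)}B(s,a)$ (finite). A fraction $c/0$ with $c>0$ is read as $+\infty$. LP$(\Theta)$: maximize $\sum_{s}\sum_{a\in\mathcal{A}_s}\pi(s,a)\Theta(s,a)$ subject to $\pi(s,a)\ge 0$, $\sum_s\sum_{a\in\mathcal{A}_s}\pi(s,a)=1$, and $\sum_{a\in\mathcal{A}_{s'}}\pi(s',a)=\sum_s\sum_{a\in\mathcal{A}_s}\pi(s,a)P(s'\mid s,a)$ for all $s'\in\mathcal{S}$. Algorithm LPSM: at slot $0$ play any allowed action. At each slot $n\ge 1$, let $\Theta_n(s,a)=\frac1n\sum_{k=0}^{n-1}f(s,a,x_k)$ for all allowed pairs $(s,a)$, solve LP$(\Theta_n)$ to obtain a solution $\pi_{(n)}$, define $\beta_n(s)\in\arg\max_{a\in\mathcal{A}_s}\pi_{(n)}(s,a)$ for every $s$, and play $\beta_n(s_n)$. *)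

theory Defs
  imports "HOL-Probability.Probability"
begin

definition valid_policy :: "('s \<Rightarrow> 'a set) \<Rightarrow> ('s \<Rightarrow> 'a) \<Rightarrow> bool" where
  "valid_policy Acts \<beta> \<longleftrightarrow> (\<forall>s. \<beta> s \<in> Acts s)"

definition chain_of :: "('s \<Rightarrow> 'a \<Rightarrow> 's \<Rightarrow> real) \<Rightarrow> ('s \<Rightarrow> 'a) \<Rightarrow> 's \<Rightarrow> 's \<Rightarrow> real" where
  "chain_of P \<beta> s s' = P s (\<beta> s) s'"

fun mpow :: "('s::finite \<Rightarrow> 's \<Rightarrow> real) \<Rightarrow> nat \<Rightarrow> 's \<Rightarrow> 's \<Rightarrow> real" where
  "mpow Q 0 s s' = (if s = s' then 1 else 0)"
| "mpow Q (Suc n) s s' = (\<Sum>u\<in>UNIV. mpow Q n s u * Q u s')"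

definition irreducible_chain :: "('s::finite \<Rightarrow> 's \<Rightarrow> real) \<Rightarrow> bool" where
  "irreducible_chain Q \<longleftrightarrow> (\<forall>s s'. \<exists>n. mpow Q n s s' > 0)"

definition aperiodic_chain :: "('s::finite \<Rightarrow> 's \<Rightarrow> real) \<Rightarrow> bool" where
  "aperiodic_chain Q \<longleftrightarrow> (\<forall>s. Gcd {n. n > 0 \<and> mpow Q n s s > 0} = (1::nat))"

definition is_stationary :: "('s::finite \<Rightarrow> 's \<Rightarrow> real) \<Rightarrow> ('s \<Rightarrow> real) \<Rightarrow> bool" where
  "is_stationary Q p \<longleftrightarrow> (\<forall>s. p s \<ge> 0) \<and> (\<Sum>s\<in>UNIV. p s) = 1 \<and>
     (\<forall>s'. p s' = (\<Sum>s\<in>UNIV. p s * Q s s'))"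

text \<open>The (unique, under irreducibility) stationary distribution pi_beta.\<close>
definition stat_dist :: "('s::finite \<Rightarrow> 'a \<Rightarrow> 's \<Rightarrow> real) \<Rightarrow> ('s \<Rightarrow> 'a) \<Rightarrow> 's \<Rightarrow> real" where
  "stat_dist P \<beta> = (THE p. is_stationary (chain_of P \<beta>) p)"

definition rho :: "('s::finite \<Rightarrow> 'a \<Rightarrow> 's \<Rightarrow> real) \<Rightarrow> ('s \<Rightarrow> 'a) \<Rightarrow> ('s \<Rightarrow> 'a \<Rightarrow> real) \<Rightarrow> real" where
  "rho P \<beta> \<Theta> = (\<Sum>s\<in>UNIV. stat_dist P \<beta> s * \<Theta> s (\<beta> s))"

text \<open>The linear program LP(Theta); variables pi(s,a) for allowed pairs only.\<close>
definition LP_feasible :: "('s::finite \<Rightarrow> 'a::finite set) \<Rightarrow> ('s \<Rightarrow> 'a \<Rightarrow> 's \<Rightarrow> real) \<Rightarrow> ('s \<Rightarrow> 'a \<Rightarrow> real) \<Rightarrow> bool" where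
  "LP_feasible Acts P p \<longleftrightarrow>
     (\<forall>s. \<forall>a\<in>Acts s. p s a \<ge> 0) \<and>
     (\<Sum>s\<in>UNIV. \<Sum>a\<in>Acts s. p s a) = 1 \<and>
     (\<forall>s'. (\<Sum>a\<in>Acts s'. p s' a) = (\<Sum>s\<in>UNIV. \<Sum>a\<in>Acts s. p s a * P s a s'))"

definition LP_obj :: "('s::finite \<Rightarrow> 'a::finite set) \<Rightarrow> ('s \<Rightarrow> 'a \<Rightarrow> real) \<Rightarrow> ('s \<Rightarrow> 'a \<Rightarrow> real) \<Rightarrow> real" where
  "LP_obj Acts p \<Theta> = (\<Sum>s\<in>UNIV. \<Sum>a\<in>Acts s. p s a * \<Theta> s a)"

definition LP_optimal :: "('s::finite \<Rightarrow> 'a::finite set) \<Rightarrow> ('s \<Rightarrow> 'a \<Rightarrow> 's \<Rightarrow> real) \<Rightarrow> ('s \<Rightarrow> 'a \<Rightarrow> real) \<Rightarrow> ('s \<Rightarrow> 'a \<Rightarrow> real) \<Rightarrow> bool" where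
  "LP_optimal Acts P \<Theta> p \<longleftrightarrow> LP_feasible Acts P p \<and>
     (\<forall>q. LP_feasible Acts P q \<longrightarrow> LP_obj Acts q \<Theta> \<le> LP_obj Acts p \<Theta>)"

text \<open>b is a policy LPSM may output for matrix Theta: b(s) is an argmax over allowed a
  of pi(s,a) for some optimal solution pi of LP(Theta).\<close>
definition LPSM_policy :: "('s::finite \<Rightarrow> 'a::finite set) \<Rightarrow> ('s \<Rightarrow> 'a \<Rightarrow> 's \<Rightarrow> real) \<Rightarrow> ('s \<Rightarrow> 'a \<Rightarrow> real) \<Rightarrow> ('s \<Rightarrow> 'a) \<Rightarrow> bool" where
  "LPSM_policy Acts P \<Theta> b \<longleftrightarrow> (\<exists>p. LP_optimal Acts P \<Theta> p \<and>
     (\<forall>s. b s \<in> Acts s \<and> (\<forall>a\<in>Acts s. p s a \<le> p s (b s))))"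

definition Theta_emp :: "('s \<Rightarrow> 'a \<Rightarrow> 'x \<Rightarrow> real) \<Rightarrow> (nat \<Rightarrow> 'w \<Rightarrow> 'x) \<Rightarrow> nat \<Rightarrow> 'w \<Rightarrow> 's \<Rightarrow> 'a \<Rightarrow> real" where
  "Theta_emp f X n \<omega> s a = (\<Sum>k<n. f s a (X k \<omega>)) / real n"

end

theory Submission
  imports Defs
begin

text \<open>LPSM can err at slot n only on one of (1 + A) S deviation events of the empirical
  means. Let \<Delta> be the gap of the optimal policy bs. If the estimate \<Theta> exceeds M by less
  than \<Delta>/2 on every allowed pair and falls short of it by less than \<Delta>/2 along bs, then bs
  is strictly optimal for \<Theta>, and LPSM must output bs: writing the objective of LP(\<Theta>) as
  the gain of bs plus the average advantage with respect to a bias vector of bs (a solution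
  of the Poisson equation), every optimal LP solution is supported on the actions of bs and
  its state marginal is the stationary distribution of bs, which is positive. By Hoeffding's
  inequality each deviation event at slot n has probability at most exp (- n (\<Delta>/B0)^2 / 2),
  and summing the geometric series gives the bound.\<close>

section \<open>Finite irreducible Markov chains\<close>

lemma mpow_nonneg: "(\<And>s s'. Q s s' \<ge> 0) \<Longrightarrow> mpow Q n s s' \<ge> 0"
  by (induction n arbitrary: s') (auto intro!: sum_nonneg)

lemma invariant_mpow:
  fixes Q :: "'s::finite \<Rightarrow> 's \<Rightarrow> real"
  assumes "\<And>s'. v s' = (\<Sum>s\<in>UNIV. v s * Q s s')"
  shows "v s' = (\<Sum>s\<in>UNIV. v s * mpow Q n s s')"
proof (induction n arbitrary: s')
  case 0
  then show ?case by (simp add: if_distrib cong: if_cong)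
next
  case (Suc n)
  have "(\<Sum>s\<in>UNIV. v s * mpow Q (Suc n) s s') = (\<Sum>u\<in>UNIV. (\<Sum>s\<in>UNIV. v s * mpow Q n s u) * Q u s')"
    by (simp add: sum_distrib_left sum_distrib_right mult.assoc) (rule sum.swap)
  also have "\<dots> = (\<Sum>u\<in>UNIV. v u * Q u s')"
    by (simp only: Suc.IH[symmetric])
  finally show ?case by (simp add: assms[symmetric])
qed

lemma stationary_expectation_step:
  fixes Q :: "'s::finite \<Rightarrow> 's \<Rightarrow> real"
  assumes "is_stationary Q \<pi>"
  shows "(\<Sum>s\<in>UNIV. \<pi> s * (\<Sum>s'\<in>UNIV. Q s s' * h s')) = (\<Sum>s\<in>UNIV. \<pi> s * h s)"
proof -
  have "(\<Sum>s\<in>UNIV. \<pi> s * (\<Sum>s'\<in>UNIV. Q s s' * h s')) = (\<Sum>s'\<in>UNIV. (\<Sum>s\<in>UNIV. \<pi> s * Q s s') * h s')"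
    by (simp add: sum_distrib_left sum_distrib_right mult.assoc) (rule sum.swap)
  also have "\<dots> = (\<Sum>s'\<in>UNIV. \<pi> s' * h s')"
    using assms unfolding is_stationary_def by (metis (no_types, lifting))
  finally show ?thesis .
qed

locale stochastic_matrix =
  fixes Q :: "'s::finite \<Rightarrow> 's \<Rightarrow> real"
  assumes nonneg: "Q s s' \<ge> 0"
    and row_sum: "(\<Sum>s'\<in>UNIV. Q s s') = 1"
begin

lemma abs_invariant:
  assumes inv: "\<And>s'. v s' = (\<Sum>s\<in>UNIV. v s * Q s s')"
  shows "\<bar>v s'\<bar> = (\<Sum>s\<in>UNIV. \<bar>v s\<bar> * Q s s')"
proof -
  have le: "\<bar>v j\<bar> \<le> (\<Sum>i\<in>UNIV. \<bar>v i\<bar> * Q i j)" for j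
  proof -
    have "\<bar>v j\<bar> \<le> (\<Sum>i\<in>UNIV. \<bar>v i * Q i j\<bar>)"
      by (subst inv) (rule sum_abs)
    then show ?thesis using nonneg by (simp add: abs_mult)
  qed
  \<comment> \<open>Both sides have the same total mass, so the pointwise inequality is an equality.\<close>
  have "(\<Sum>j\<in>UNIV. \<Sum>i\<in>UNIV. \<bar>v i\<bar> * Q i j) = (\<Sum>i\<in>UNIV. \<bar>v i\<bar>)"
    by (subst sum.swap) (simp add: sum_distrib_left[symmetric] row_sum)
  then have "(\<Sum>j\<in>UNIV. (\<Sum>i\<in>UNIV. \<bar>v i\<bar> * Q i j) - \<bar>v j\<bar>) = 0"
    by (simp add: sum_subtractf)
  then have "\<forall>j\<in>UNIV. (\<Sum>i\<in>UNIV. \<bar>v i\<bar> * Q i j) - \<bar>v j\<bar> = 0"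
    by (subst sum_nonneg_eq_0_iff[symmetric]) (auto simp: le)
  then show ?thesis by auto
qed

lemma stationary_exists: "\<exists>p. is_stationary Q p"
proof -
  define L :: "real^'s \<Rightarrow> real^'s" where "L v = (\<chi> j. v$j - (\<Sum>i\<in>UNIV. v$i * Q i j))" for v
  have lin: "linear L"
    by (rule linearI) (simp_all add: L_def vec_eq_iff sum.distrib sum_distrib_left algebra_simps sum_subtractf)
  have sum_L: "(\<Sum>j\<in>UNIV. L v $ j) = 0" for v
  proof -
    have "(\<Sum>j\<in>UNIV. \<Sum>i\<in>UNIV. v$i * Q i j) = (\<Sum>i\<in>UNIV. v$i)"
      by (subst sum.swap) (simp add: sum_distrib_left[symmetric] row_sum)
    then show ?thesis by (simp add: L_def sum_subtractf)
  qed
  have "\<not> surj L"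
  proof
    assume "surj L"
    then obtain v where "L v = (\<chi> j. 1)" by (metis surjD)
    then have "(\<Sum>j\<in>UNIV. L v $ j) = real CARD('s)" by simp
    with sum_L show False by simp
  qed
  then have "\<not> inj L" using linear_injective_imp_surjective[OF lin] by blast
  then obtain x where x: "L x = 0" "x \<noteq> 0" using linear_injective_0[OF lin] by blast
  then obtain s1 where "x $ s1 \<noteq> 0" by (auto simp: vec_eq_iff)
  have x_inv: "x $ s' = (\<Sum>s\<in>UNIV. x $ s * Q s s')" for s'
    using arg_cong[OF x(1), of "\<lambda>v. v $ s'"] by (simp add: L_def)
  define w where "w s = \<bar>x $ s\<bar>" for s
  have w_inv: "w s' = (\<Sum>s\<in>UNIV. w s * Q s s')" for s'
    unfolding w_def by (rule abs_invariant[OF x_inv])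
  have w_pos: "(\<Sum>s\<in>UNIV. w s) > 0"
  proof -
    have "w s1 \<le> (\<Sum>s\<in>UNIV. w s)" by (rule member_le_sum) (auto simp: w_def)
    then show ?thesis using \<open>x $ s1 \<noteq> 0\<close> by (simp add: w_def)
  qed
  have "is_stationary Q (\<lambda>s. w s / (\<Sum>s\<in>UNIV. w s))"
    unfolding is_stationary_def
  proof (intro conjI allI)
    show "0 \<le> w s / (\<Sum>s\<in>UNIV. w s)" for s using w_pos by (simp add: w_def)
    show "(\<Sum>s\<in>UNIV. w s / (\<Sum>s\<in>UNIV. w s)) = 1"
      using w_pos by (simp add: sum_divide_distrib[symmetric])
    show "w s' / (\<Sum>s\<in>UNIV. w s) = (\<Sum>s\<in>UNIV. w s / (\<Sum>s\<in>UNIV. w s) * Q s s')" for s'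
      using w_inv[of s'] by (simp add: sum_divide_distrib[symmetric])
  qed
  then show ?thesis by blast
qed

end

locale irreducible_stochastic_matrix = stochastic_matrix Q for Q :: "'s::finite \<Rightarrow> 's \<Rightarrow> real" +
  assumes irreducible: "irreducible_chain Q"
begin

lemma invariant_pos:
  assumes inv: "\<And>s'. u s' = (\<Sum>s\<in>UNIV. u s * Q s s')"
    and u_nonneg: "\<And>s. u s \<ge> 0" and pos: "u s0 > 0"
  shows "u s' > 0"
proof -
  obtain n where n: "mpow Q n s0 s' > 0" using irreducible unfolding irreducible_chain_def by blast
  have "u s0 * mpow Q n s0 s' \<le> (\<Sum>s\<in>UNIV. u s * mpow Q n s s')"
    by (rule member_le_sum) (auto intro!: mult_nonneg_nonneg u_nonneg mpow_nonneg nonneg)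
  also have "\<dots> = u s'" by (rule invariant_mpow[OF inv, symmetric])
  finally show ?thesis using n pos by (smt (verit) mult_pos_pos)
qed

lemma stationary_pos:
  assumes "is_stationary Q p"
  shows "p s > 0"
proof -
  have p: "\<And>s'. p s' = (\<Sum>s\<in>UNIV. p s * Q s s')" "\<And>s. p s \<ge> 0" "(\<Sum>s\<in>UNIV. p s) = 1"
    using assms unfolding is_stationary_def by blast+
  then obtain s0 where "p s0 > 0"
    by (metis less_eq_real_def sum_nonneg_eq_0_iff finite zero_neq_one)
  then show ?thesis by (rule invariant_pos[OF p(1,2)])
qed

text \<open>The positive part of an invariant vector is again invariant, so it vanishes or is
  positive everywhere.\<close>
lemma invariant_sum_zero:
  assumes inv: "\<And>s'. v s' = (\<Sum>s\<in>UNIV. v s * Q s s')"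
    and sum_zero: "(\<Sum>s\<in>UNIV. v s) = 0"
  shows "v s = 0"
proof -
  define u where "u s = (\<bar>v s\<bar> + v s) / 2" for s
  have u_inv: "u s' = (\<Sum>s\<in>UNIV. u s * Q s s')" for s'
  proof -
    have "(\<Sum>s\<in>UNIV. u s * Q s s') = ((\<Sum>s\<in>UNIV. \<bar>v s\<bar> * Q s s') + (\<Sum>s\<in>UNIV. v s * Q s s')) / 2"
      by (simp add: u_def sum_divide_distrib[symmetric] sum.distrib distrib_right)
    also have "\<dots> = u s'"
      by (simp only: u_def abs_invariant[OF inv, of s', symmetric] inv[of s', symmetric])
    finally show ?thesis ..
  qed
  have u_nonneg: "u s \<ge> 0" for s by (auto simp: u_def)
  show ?thesis
  proof (cases "\<exists>s0. u s0 > 0")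
    case True
    then have u_pos: "u s > 0" for s using invariant_pos[OF u_inv u_nonneg] by blast
    have "v s > 0" for s using u_pos[of s] by (auto simp: u_def abs_if split: if_splits)
    then have "(\<Sum>s\<in>UNIV. v s) > 0" by (intro sum_pos) auto
    then show ?thesis using sum_zero by simp
  next
    case False
    then have u_nonpos: "\<not> u s > 0" for s by blast
    have "v s \<le> 0" for s using u_nonpos[of s] by (auto simp: u_def abs_if split: if_splits)
    then have "\<forall>s\<in>UNIV. - v s = 0"
      using sum_zero by (subst sum_nonneg_eq_0_iff[symmetric]) (auto simp: sum_negf)
    then show ?thesis by auto
  qed
qed

lemma stationary_unique:
  assumes p: "is_stationary Q p" and q: "is_stationary Q q"
  shows "p = q"
proof
  fix s
  have "p s - q s = 0"
  proof (rule invariant_sum_zero)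
    show "p s' - q s' = (\<Sum>s\<in>UNIV. (p s - q s) * Q s s')" for s'
    proof -
      have "p s' = (\<Sum>s\<in>UNIV. p s * Q s s')" "q s' = (\<Sum>s\<in>UNIV. q s * Q s s')"
        using p q unfolding is_stationary_def by blast+
      then show ?thesis by (simp add: left_diff_distrib sum_subtractf)
    qed
    have "sum p UNIV = 1" "sum q UNIV = 1" using p q unfolding is_stationary_def by blast+
    then show "(\<Sum>s\<in>UNIV. p s - q s) = 0" by (simp add: sum_subtractf)
  qed
  then show "p s = q s" by simp
qed

text \<open>Maximum principle: the set where a harmonic function attains its maximum is closed
  under transitions, hence everything by irreducibility.\<close>
lemma harmonic_const:
  assumes h: "\<And>s. h s = (\<Sum>s'\<in>UNIV. Q s s' * h s')"
  shows "h s = h t"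
proof -
  define m where "m = Max (range h)"
  have h_le: "h s \<le> m" for s unfolding m_def by (rule Max_ge) auto
  have "m \<in> range h" unfolding m_def by (rule Max_in) auto
  then obtain s0 where s0: "h s0 = m" by auto
  have step: "h s' = m" if "h u = m" "Q u s' > 0" for u s'
  proof -
    have "(\<Sum>x\<in>UNIV. Q u x * (m - h x)) = m * (\<Sum>x\<in>UNIV. Q u x) - (\<Sum>x\<in>UNIV. Q u x * h x)"
      by (simp add: right_diff_distrib sum_subtractf sum_distrib_left mult.commute)
    also have "\<dots> = m - h u" using row_sum h[of u] by simp
    finally have "(\<Sum>x\<in>UNIV. Q u x * (m - h x)) = m - h u" .
    then have "(\<Sum>x\<in>UNIV. Q u x * (m - h x)) = 0" using that(1) by simp
    then have "\<forall>x\<in>UNIV. Q u x * (m - h x) = 0"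
      by (subst sum_nonneg_eq_0_iff[symmetric]) (auto intro!: mult_nonneg_nonneg nonneg simp: h_le)
    then have "Q u s' * (m - h s') = 0" by blast
    then show ?thesis using that(2) by simp
  qed
  have reach: "h s' = m" if "mpow Q n s0 s' > 0" for n s'
    using that
  proof (induction n arbitrary: s')
    case 0
    then show ?case using s0 by (auto split: if_splits)
  next
    case (Suc n)
    then have "(\<Sum>u\<in>UNIV. mpow Q n s0 u * Q u s') > 0" by simp
    then obtain u where "mpow Q n s0 u * Q u s' > 0"
      using sum_nonpos[of UNIV "\<lambda>u. mpow Q n s0 u * Q u s'"] by (force simp: not_less)
    moreover have "mpow Q n s0 u \<ge> 0" "Q u s' \<ge> 0" by (simp_all add: mpow_nonneg nonneg)
    ultimately have "mpow Q n s0 u > 0" "Q u s' > 0" by (auto simp: zero_less_mult_iff)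
    then show ?case using Suc.IH step by blast
  qed
  have "h x = m" for x using irreducible reach unfolding irreducible_chain_def by blast
  then show ?thesis by simp
qed

text \<open>Existence of a bias vector: the map x \<mapsto> x - Qx + \<pi>(x)\<one> is injective by the maximum
  principle, hence surjective.\<close>
lemma poisson_equation:
  assumes pi: "is_stationary Q \<pi>"
  shows "\<exists>h. \<forall>s. (\<Sum>s'\<in>UNIV. \<pi> s' * r s') + h s = r s + (\<Sum>s'\<in>UNIV. Q s s' * h s')"
proof -
  define g where "g = (\<Sum>s'\<in>UNIV. \<pi> s' * r s')"
  have pi_sum: "(\<Sum>s\<in>UNIV. \<pi> s) = 1" using pi unfolding is_stationary_def by blast
  define T :: "real^'s \<Rightarrow> real^'s" where
    "T x = (\<chi> s. x$s - (\<Sum>s'\<in>UNIV. Q s s' * x$s') + (\<Sum>s'\<in>UNIV. \<pi> s' * x$s'))" for x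
  have lin: "linear T"
    by (rule linearI) (simp_all add: T_def vec_eq_iff sum.distrib sum_distrib_left algebra_simps sum_subtractf)
  have pi_T: "(\<Sum>s\<in>UNIV. \<pi> s * T x $ s) = (\<Sum>s\<in>UNIV. \<pi> s * x$s)" for x
  proof -
    have "(\<Sum>s\<in>UNIV. \<pi> s * T x $ s) = (\<Sum>s\<in>UNIV. \<pi> s * x$s)
        - (\<Sum>s\<in>UNIV. \<pi> s * (\<Sum>s'\<in>UNIV. Q s s' * x$s'))
        + (\<Sum>s\<in>UNIV. \<pi> s) * (\<Sum>s'\<in>UNIV. \<pi> s' * x$s')"
      by (simp add: T_def algebra_simps sum.distrib sum_subtractf sum_distrib_right)
    then show ?thesis using stationary_expectation_step[OF pi, of "\<lambda>s. x$s"] pi_sum by simp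
  qed
  have "inj T"
    unfolding linear_injective_0[OF lin]
  proof (intro allI impI)
    fix x assume T0: "T x = 0"
    have mean0: "(\<Sum>s\<in>UNIV. \<pi> s * x$s) = 0" using pi_T[of x] T0 by simp
    have "x$s = (\<Sum>s'\<in>UNIV. Q s s' * x$s')" for s
    proof -
      have "T x $ s = 0" using T0 by simp
      then show ?thesis using mean0 by (simp add: T_def)
    qed
    then have const: "x$s = x$s0" for s s0 by (rule harmonic_const)
    have "(\<Sum>s\<in>UNIV. \<pi> s * x$s) = (\<Sum>s\<in>UNIV. \<pi> s) * x$s0" for s0
      by (subst sum_distrib_right) (metis const)
    then show "x = 0" using mean0 pi_sum by (simp add: vec_eq_iff)
  qed
  then have "surj T" using linear_injective_imp_surjective[OF lin] by blast
  then obtain x where x: "T x = (\<chi> s. r s - g)" by (metis surjD)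
  have "(\<Sum>s\<in>UNIV. \<pi> s * (r s - g)) = 0" using pi_sum
    by (simp add: g_def right_diff_distrib sum_subtractf sum_distrib_right[symmetric])
  then have mean0: "(\<Sum>s\<in>UNIV. \<pi> s * x$s) = 0" using pi_T[of x] x by simp
  have "g + x$s = r s + (\<Sum>s'\<in>UNIV. Q s s' * x$s')" for s
  proof -
    have "T x $ s = r s - g" using x by simp
    then show ?thesis using mean0 by (simp add: T_def)
  qed
  then show ?thesis unfolding g_def by blast
qed

end

section \<open>The linear program of an average-reward MDP\<close>

text \<open>Below, g and h are the gain and a bias vector of a reference policy.\<close>
definition advantage ::
  "('s::finite \<Rightarrow> 'a \<Rightarrow> 's \<Rightarrow> real) \<Rightarrow> ('s \<Rightarrow> 'a \<Rightarrow> real) \<Rightarrow> real \<Rightarrow> ('s \<Rightarrow> real) \<Rightarrow> 's \<Rightarrow> 'a \<Rightarrow> real"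
  where "advantage P \<Theta> g h s a = \<Theta> s a + (\<Sum>s'\<in>UNIV. P s a s' * h s') - g - h s"

definition policy_occupation :: "('s::finite \<Rightarrow> 'a \<Rightarrow> 's \<Rightarrow> real) \<Rightarrow> ('s \<Rightarrow> 'a) \<Rightarrow> 's \<Rightarrow> 'a \<Rightarrow> real"
  where "policy_occupation P \<beta> s a = (if a = \<beta> s then stat_dist P \<beta> s else 0)"

lemma LP_obj_eq_advantage:
  assumes "LP_feasible Acts P q"
  shows "LP_obj Acts q \<Theta> = g + LP_obj Acts q (advantage P \<Theta> g h)"
proof -
  have q_sum: "(\<Sum>s\<in>UNIV. \<Sum>a\<in>Acts s. q s a) = 1"
    and flow: "\<And>s'. (\<Sum>a\<in>Acts s'. q s' a) = (\<Sum>s\<in>UNIV. \<Sum>a\<in>Acts s. q s a * P s a s')"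
    using assms unfolding LP_feasible_def by blast+
  have "(\<Sum>s\<in>UNIV. \<Sum>a\<in>Acts s. q s a * (\<Sum>s'\<in>UNIV. P s a s' * h s'))
      = (\<Sum>s\<in>UNIV. \<Sum>s'\<in>UNIV. \<Sum>a\<in>Acts s. q s a * P s a s' * h s')"
    by (simp add: sum_distrib_left mult.assoc sum.swap[of _ "Acts _"])
  also have "\<dots> = (\<Sum>s'\<in>UNIV. (\<Sum>s\<in>UNIV. \<Sum>a\<in>Acts s. q s a * P s a s') * h s')"
    by (subst sum.swap) (simp add: sum_distrib_right)
  also have "\<dots> = (\<Sum>s\<in>UNIV. \<Sum>a\<in>Acts s. q s a * h s)"
    by (simp add: flow[symmetric] sum_distrib_right)
  finally have "(\<Sum>s\<in>UNIV. \<Sum>a\<in>Acts s. q s a * (\<Sum>s'\<in>UNIV. P s a s' * h s'))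
      = (\<Sum>s\<in>UNIV. \<Sum>a\<in>Acts s. q s a * h s)" .
  moreover have "(\<Sum>s\<in>UNIV. \<Sum>a\<in>Acts s. q s a * g) = g"
    using q_sum by (simp add: sum_distrib_right[symmetric])
  ultimately show ?thesis
    by (simp add: LP_obj_def advantage_def right_diff_distrib distrib_left sum_subtractf sum.distrib)
qed

locale irreducible_mdp =
  fixes Acts :: "'s::finite \<Rightarrow> 'a::finite set" and P :: "'s \<Rightarrow> 'a \<Rightarrow> 's \<Rightarrow> real"
  assumes P_nonneg: "P s a s' \<ge> 0"
    and P_sum: "a \<in> Acts s \<Longrightarrow> (\<Sum>s'\<in>UNIV. P s a s') = 1"
    and irreducible: "valid_policy Acts \<beta> \<Longrightarrow> irreducible_chain (chain_of P \<beta>)"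
begin

lemma irreducible_stochastic_matrix_chain_of:
  "valid_policy Acts \<beta> \<Longrightarrow> irreducible_stochastic_matrix (chain_of P \<beta>)"
  by unfold_locales (auto simp: chain_of_def valid_policy_def P_nonneg P_sum irreducible)

lemma stat_dist_stationary:
  assumes "valid_policy Acts \<beta>"
  shows "is_stationary (chain_of P \<beta>) (stat_dist P \<beta>)"
proof -
  interpret irreducible_stochastic_matrix "chain_of P \<beta>"
    using assms by (rule irreducible_stochastic_matrix_chain_of)
  show ?thesis
    unfolding stat_dist_def using stationary_exists stationary_unique by (metis theI)
qed

lemma stat_dist_pos: "valid_policy Acts \<beta> \<Longrightarrow> stat_dist P \<beta> s > 0"
  by (metis irreducible_stochastic_matrix.stationary_pos irreducible_stochastic_matrix_chain_of
      stat_dist_stationary)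

lemma stat_dist_sum: "valid_policy Acts \<beta> \<Longrightarrow> (\<Sum>s\<in>UNIV. stat_dist P \<beta> s) = 1"
  using stat_dist_stationary unfolding is_stationary_def by blast

lemma rho_add_const: "valid_policy Acts \<beta> \<Longrightarrow> rho P \<beta> (\<lambda>s a. \<Theta> s a + c) = rho P \<beta> \<Theta> + c"
  unfolding rho_def by (simp add: distrib_left sum.distrib sum_distrib_right[symmetric] stat_dist_sum)

lemma rho_strict_mono:
  assumes "valid_policy Acts \<beta>" and "\<And>s. \<Theta> s (\<beta> s) < \<Theta>' s (\<beta> s)"
  shows "rho P \<beta> \<Theta> < rho P \<beta> \<Theta>'"
  unfolding rho_def
  by (rule sum_strict_mono) (auto intro!: mult_strict_left_mono stat_dist_pos assms)

lemma sum_policy_occupation: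
  assumes "valid_policy Acts \<beta>"
  shows "(\<Sum>a\<in>Acts s. policy_occupation P \<beta> s a * F a) = stat_dist P \<beta> s * F (\<beta> s)"
proof -
  have "(\<Sum>a\<in>Acts s. policy_occupation P \<beta> s a * F a)
      = (\<Sum>a\<in>Acts s. if a = \<beta> s then stat_dist P \<beta> s * F a else 0)"
    by (rule sum.cong) (simp_all add: policy_occupation_def)
  then show ?thesis using assms by (simp add: valid_policy_def)
qed

lemma LP_feasible_policy_occupation:
  assumes \<beta>: "valid_policy Acts \<beta>"
  shows "LP_feasible Acts P (policy_occupation P \<beta>)"
  unfolding LP_feasible_def
proof (intro conjI allI ballI)
  show "policy_occupation P \<beta> s a \<ge> 0" for s a
    using stat_dist_pos[OF \<beta>] by (simp add: policy_occupation_def less_imp_le)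
  show "(\<Sum>s\<in>UNIV. \<Sum>a\<in>Acts s. policy_occupation P \<beta> s a) = 1"
    using sum_policy_occupation[OF \<beta>, where F = "\<lambda>_. 1"] stat_dist_sum[OF \<beta>] by simp
  fix s'
  have "stat_dist P \<beta> s' = (\<Sum>s\<in>UNIV. stat_dist P \<beta> s * P s (\<beta> s) s')"
    using stat_dist_stationary[OF \<beta>] unfolding is_stationary_def chain_of_def by blast
  then show "(\<Sum>a\<in>Acts s'. policy_occupation P \<beta> s' a)
      = (\<Sum>s\<in>UNIV. \<Sum>a\<in>Acts s. policy_occupation P \<beta> s a * P s a s')"
    using sum_policy_occupation[OF \<beta>, where F = "\<lambda>_. 1"] sum_policy_occupation[OF \<beta>]
    by simp
qed

lemma LP_obj_policy_occupation:
  "valid_policy Acts \<beta> \<Longrightarrow> LP_obj Acts (policy_occupation P \<beta>) \<Theta> = rho P \<beta> \<Theta>"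
  unfolding LP_obj_def rho_def by (simp add: sum_policy_occupation)

lemma rho_eq_advantage:
  "valid_policy Acts \<beta> \<Longrightarrow> rho P \<beta> \<Theta> = g + rho P \<beta> (advantage P \<Theta> g h)"
  by (metis LP_obj_eq_advantage LP_feasible_policy_occupation LP_obj_policy_occupation)

lemma exists_bias:
  assumes bs: "valid_policy Acts bs"
  shows "\<exists>h. \<forall>s. advantage P \<Theta> (rho P bs \<Theta>) h s (bs s) = 0"
proof -
  interpret irreducible_stochastic_matrix "chain_of P bs"
    using bs by (rule irreducible_stochastic_matrix_chain_of)
  obtain h where h: "\<And>s. rho P bs \<Theta> + h s = \<Theta> s (bs s) + (\<Sum>s'\<in>UNIV. chain_of P bs s s' * h s')"
    using poisson_equation[OF stat_dist_stationary[OF bs], of "\<lambda>s. \<Theta> s (bs s)"]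
    unfolding rho_def by blast
  have "advantage P \<Theta> (rho P bs \<Theta>) h s (bs s) = 0" for s
    using h[of s] unfolding advantage_def chain_of_def by linarith
  then show ?thesis by blast
qed

lemma advantage_neg:
  assumes bs: "valid_policy Acts bs"
    and strict: "\<And>\<beta>. valid_policy Acts \<beta> \<Longrightarrow> \<beta> \<noteq> bs \<Longrightarrow> rho P \<beta> \<Theta> < rho P bs \<Theta>"
    and zero: "\<And>s. advantage P \<Theta> (rho P bs \<Theta>) h s (bs s) = 0"
    and a: "a \<in> Acts s" "a \<noteq> bs s"
  shows "advantage P \<Theta> (rho P bs \<Theta>) h s a < 0"
proof -
  define g where "g = rho P bs \<Theta>"
  define \<beta> where "\<beta> = bs(s := a)"
  have \<beta>: "valid_policy Acts \<beta>" using bs a by (auto simp: valid_policy_def \<beta>_def)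
  have "rho P \<beta> (advantage P \<Theta> g h) = stat_dist P \<beta> s * advantage P \<Theta> g h s a"
    unfolding rho_def
    by (subst sum.remove[of _ s]) (auto simp: \<beta>_def zero g_def intro!: sum.neutral)
  moreover have "rho P \<beta> \<Theta> < g"
    using strict[OF \<beta>] a by (auto simp: \<beta>_def g_def fun_eq_iff)
  ultimately have "stat_dist P \<beta> s * advantage P \<Theta> g h s a < 0"
    using rho_eq_advantage[OF \<beta>, of \<Theta> g h] by linarith
  then show ?thesis using stat_dist_pos[OF \<beta>, of s] by (auto simp: g_def mult_less_0_iff)
qed

text \<open>Under a strictly optimal policy bs every optimal solution of LP(\<Theta>) puts no mass on
  non-optimal actions: its objective exceeds the gain of bs by a sum of nonpositive
  advantages, which must therefore all vanish.\<close>
lemma LP_optimal_vanishes_off_policy: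
  assumes bs: "valid_policy Acts bs"
    and strict: "\<And>\<beta>. valid_policy Acts \<beta> \<Longrightarrow> \<beta> \<noteq> bs \<Longrightarrow> rho P \<beta> \<Theta> < rho P bs \<Theta>"
    and opt: "LP_optimal Acts P \<Theta> p"
    and a: "a \<in> Acts s" "a \<noteq> bs s"
  shows "p s a = 0"
proof -
  obtain h where zero: "\<And>s. advantage P \<Theta> (rho P bs \<Theta>) h s (bs s) = 0"
    using exists_bias[OF bs] by blast
  define adv where "adv = advantage P \<Theta> (rho P bs \<Theta>) h"
  have feas: "LP_feasible Acts P p" using opt unfolding LP_optimal_def by blast
  have p_nonneg: "p s a \<ge> 0" if "a \<in> Acts s" for s a
    using feas that unfolding LP_feasible_def by blast
  have adv_neg: "adv s a < 0" if "a \<in> Acts s" "a \<noteq> bs s" for s a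
    unfolding adv_def by (rule advantage_neg[OF bs strict zero that])
  have term_nonpos: "p s a * adv s a \<le> 0" if "a \<in> Acts s" for s a
    using that p_nonneg[OF that] adv_neg[of a s] zero[of s]
    by (cases "a = bs s") (auto simp: adv_def mult_nonneg_nonpos)
  have "rho P bs \<Theta> \<le> LP_obj Acts p \<Theta>"
    using opt LP_feasible_policy_occupation[OF bs] LP_obj_policy_occupation[OF bs]
    unfolding LP_optimal_def by metis
  then have "LP_obj Acts p adv \<ge> 0"
    using LP_obj_eq_advantage[OF feas, of \<Theta> "rho P bs \<Theta>" h] unfolding adv_def by linarith
  moreover have inner_nonpos: "(\<Sum>a\<in>Acts s. p s a * adv s a) \<le> 0" for s
    by (rule sum_nonpos) (rule term_nonpos)
  ultimately have "(\<Sum>s\<in>UNIV. \<Sum>a\<in>Acts s. p s a * adv s a) = 0"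
    using sum_nonpos[of UNIV "\<lambda>s. \<Sum>a\<in>Acts s. p s a * adv s a"] inner_nonpos
    unfolding LP_obj_def by (meson order_antisym)
  then have "(\<Sum>a\<in>Acts s. p s a * adv s a) = 0"
    using sum_nonneg_eq_0_iff[of UNIV "\<lambda>s. - (\<Sum>a\<in>Acts s. p s a * adv s a)"] inner_nonpos
    by (simp add: sum_negf)
  then have "p s a * adv s a = 0"
    using sum_nonneg_eq_0_iff[of "Acts s" "\<lambda>a. - (p s a * adv s a)"] term_nonpos a
    by (simp add: sum_negf)
  then show ?thesis using adv_neg[OF a] by simp
qed

lemma LP_optimal_marginal:
  assumes bs: "valid_policy Acts bs"
    and strict: "\<And>\<beta>. valid_policy Acts \<beta> \<Longrightarrow> \<beta> \<noteq> bs \<Longrightarrow> rho P \<beta> \<Theta> < rho P bs \<Theta>"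
    and opt: "LP_optimal Acts P \<Theta> p"
  shows "p s (bs s) = stat_dist P bs s"
proof -
  have p_feas: "LP_feasible Acts P p" using opt unfolding LP_optimal_def by blast
  have single: "(\<Sum>a\<in>Acts s. p s a * F a) = p s (bs s) * F (bs s)" for s and F :: "'a \<Rightarrow> real"
    using bs LP_optimal_vanishes_off_policy[OF bs strict opt]
    by (subst sum.remove[of _ "bs s"]) (auto simp: valid_policy_def)
  have p_sum: "(\<Sum>s\<in>UNIV. \<Sum>a\<in>Acts s. p s a) = 1"
    and flow: "\<And>s'. (\<Sum>a\<in>Acts s'. p s' a) = (\<Sum>s\<in>UNIV. \<Sum>a\<in>Acts s. p s a * P s a s')"
    using p_feas unfolding LP_feasible_def by blast+
  have marginal: "(\<Sum>a\<in>Acts s. p s a) = p s (bs s)" for s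
    using single[of s "\<lambda>_. 1"] by simp
  have "is_stationary (chain_of P bs) (\<lambda>s. p s (bs s))"
    unfolding is_stationary_def
  proof (intro conjI allI)
    show "p s (bs s) \<ge> 0" for s
      using p_feas bs unfolding LP_feasible_def valid_policy_def by blast
    show "(\<Sum>s\<in>UNIV. p s (bs s)) = 1"
      using p_sum by (simp add: marginal)
    show "p s' (bs s') = (\<Sum>s\<in>UNIV. p s (bs s) * chain_of P bs s s')" for s'
      using flow[of s'] by (simp add: marginal single chain_of_def)
  qed
  interpret irreducible_stochastic_matrix "chain_of P bs"
    using bs by (rule irreducible_stochastic_matrix_chain_of)
  show ?thesis
    using stationary_unique[OF \<open>is_stationary _ _\<close> stat_dist_stationary[OF bs]] by metis
qed

lemma LPSM_policy_unique:
  assumes bs: "valid_policy Acts bs"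
    and strict: "\<And>\<beta>. valid_policy Acts \<beta> \<Longrightarrow> \<beta> \<noteq> bs \<Longrightarrow> rho P \<beta> \<Theta> < rho P bs \<Theta>"
    and b: "LPSM_policy Acts P \<Theta> b"
  shows "b = bs"
proof
  fix s
  obtain p where opt: "LP_optimal Acts P \<Theta> p" and b_arg: "b s \<in> Acts s" "p s (bs s) \<le> p s (b s)"
    using b bs unfolding LPSM_policy_def valid_policy_def by blast
  show "b s = bs s"
  proof (rule ccontr)
    assume "b s \<noteq> bs s"
    then have "p s (b s) = 0"
      using LP_optimal_vanishes_off_policy[OF bs strict opt b_arg(1)] by blast
    then show False
      using b_arg(2) LP_optimal_marginal[OF bs strict opt] stat_dist_pos[OF bs, of s] by simp
  qed
qed

lemma LPSM_policy_eq_if_estimates_close: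
  assumes bs: "valid_policy Acts bs"
    and gap: "\<And>\<beta>. valid_policy Acts \<beta> \<Longrightarrow> \<beta> \<noteq> bs \<Longrightarrow> rho P \<beta> \<mu> \<le> rho P bs \<mu> - \<Delta>"
    and lower: "\<And>s. \<mu> s (bs s) - \<Delta> / 2 < \<Theta> s (bs s)"
    and upper: "\<And>s a. a \<in> Acts s \<Longrightarrow> \<Theta> s a < \<mu> s a + \<Delta> / 2"
    and b: "LPSM_policy Acts P \<Theta> b"
  shows "b = bs"
proof (rule LPSM_policy_unique[OF bs _ b])
  fix \<beta> assume \<beta>: "valid_policy Acts \<beta>" and "\<beta> \<noteq> bs"
  have "rho P \<beta> \<Theta> < rho P \<beta> (\<lambda>s a. \<mu> s a + \<Delta> / 2)"
    using \<beta> upper by (intro rho_strict_mono) (auto simp: valid_policy_def)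
  also have "\<dots> = rho P \<beta> \<mu> + \<Delta> / 2" by (rule rho_add_const[OF \<beta>])
  also have "\<dots> \<le> rho P bs \<mu> + - \<Delta> / 2" using gap[OF \<beta> \<open>\<beta> \<noteq> bs\<close>] by simp
  also have "\<dots> = rho P bs (\<lambda>s a. \<mu> s a + - \<Delta> / 2)" by (rule rho_add_const[OF bs, symmetric])
  also have "\<dots> < rho P bs \<Theta>"
    using bs lower by (intro rho_strict_mono) auto
  finally show "rho P \<beta> \<Theta> < rho P bs \<Theta>" .
qed

end

section \<open>Concentration and the error probability of LPSM\<close>

lemma iid_empirical_mean_deviation:
  fixes X :: "nat \<Rightarrow> 'w \<Rightarrow> 'x" and g :: "'x \<Rightarrow> real"
  assumes M: "prob_space M"
    and X_meas: "\<forall>t. X t \<in> measurable M N"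
    and X_indep: "prob_space.indep_vars M (\<lambda>_. N) X UNIV"
    and X_ident: "\<forall>t. distr M N (X t) = distr M N (X 0)"
    and X_supp: "\<forall>t. AE \<omega> in M. X t \<omega> \<in> Xs"
    and g_meas: "g \<in> borel_measurable N"
    and g_range: "\<And>x y. x \<in> Xs \<Longrightarrow> y \<in> Xs \<Longrightarrow> g x - g y \<le> B"
    and B: "B > 0" and n: "n \<ge> 1" and \<epsilon>: "\<epsilon> \<ge> 0"
  shows "measure M {\<omega>\<in>space M. (\<Sum>k<n. g (X k \<omega>)) / real n \<ge> (\<integral>\<omega>. g (X 0 \<omega>) \<partial>M) + \<epsilon>}
           \<le> exp (-2 * real n * \<epsilon>\<^sup>2 / B\<^sup>2)"
    and "measure M {\<omega>\<in>space M. (\<Sum>k<n. g (X k \<omega>)) / real n \<le> (\<integral>\<omega>. g (X 0 \<omega>) \<partial>M) - \<epsilon>}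
           \<le> exp (-2 * real n * \<epsilon>\<^sup>2 / B\<^sup>2)"
proof -
  interpret prob_space M by (rule M)
  have "Xs \<noteq> {}"
    using X_supp AE_False by fastforce
  then obtain x0 where x0: "x0 \<in> Xs" by blast
  define lo where "lo = Inf (g ` Xs)"
  have bdd: "bdd_below (g ` Xs)"
    using g_range x0 by (intro bdd_belowI[of _ "g x0 - B"]) force
  have g_in: "g x \<in> {lo..lo + B}" if "x \<in> Xs" for x
  proof -
    have "lo \<le> g x" unfolding lo_def using bdd that by (intro cInf_lower) auto
    moreover have "g x - B \<le> lo" unfolding lo_def using g_range that x0
      by (intro cInf_greatest) force+
    ultimately show ?thesis by simp
  qed
  have [measurable]: "X t \<in> measurable M N" for t using X_meas by blast
  note g_meas[measurable]
  interpret H: Hoeffding_ineq_iid M "{..<n}" "\<lambda>k \<omega>. g (X k \<omega>)" "\<lambda>\<omega>. g (X 0 \<omega>)" lo "lo + B"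
    "\<integral>\<omega>. g (X 0 \<omega>) \<partial>M"
  proof unfold_locales
    show "indep_vars (\<lambda>_. borel) (\<lambda>k \<omega>. g (X k \<omega>)) {..<n}"
      by (rule indep_vars_compose2[OF indep_vars_subset[OF X_indep]]) auto
    show "distr M borel (\<lambda>\<omega>. g (X i \<omega>)) = distr M borel (\<lambda>\<omega>. g (X 0 \<omega>))" for i
    proof -
      have "distr M borel (\<lambda>\<omega>. g (X i \<omega>)) = distr (distr M N (X i)) borel g"
        by (subst distr_distr) (auto simp: comp_def)
      also have "\<dots> = distr M borel (\<lambda>\<omega>. g (X 0 \<omega>))"
        by (subst X_ident[rule_format]) (subst distr_distr, auto simp: comp_def)
      finally show ?thesis .
    qed
    show "AE \<omega> in M. g (X 0 \<omega>) \<in> {lo..lo + B}"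
      using X_supp[rule_format, of 0] by eventually_elim (use g_in in auto)
  qed simp_all
  have "{..<n} \<noteq> {}" "lo < lo + B" using n B by (auto simp: lessThan_empty_iff)
  then show "measure M {\<omega>\<in>space M. (\<Sum>k<n. g (X k \<omega>)) / real n \<ge> (\<integral>\<omega>. g (X 0 \<omega>) \<partial>M) + \<epsilon>}
           \<le> exp (-2 * real n * \<epsilon>\<^sup>2 / B\<^sup>2)"
    and "measure M {\<omega>\<in>space M. (\<Sum>k<n. g (X k \<omega>)) / real n \<le> (\<integral>\<omega>. g (X 0 \<omega>) \<partial>M) - \<epsilon>}
           \<le> exp (-2 * real n * \<epsilon>\<^sup>2 / B\<^sup>2)"
    using H.Hoeffding_ineq_ge'[OF \<epsilon>] H.Hoeffding_ineq_le'[OF \<epsilon>] by simp_all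
qed

lemma (in finite_measure) measure_UN_state_action_le:
  fixes L :: "'s::finite \<Rightarrow> 'a set" and U :: "'s \<Rightarrow> 'b::finite \<Rightarrow> 'a set"
  assumes L: "\<And>s. L s \<in> sets M" "\<And>s. measure M (L s) \<le> e"
    and U: "\<And>s a. U s a \<in> sets M" "\<And>s a. a \<in> A s \<Longrightarrow> measure M (U s a) \<le> e"
  shows "measure M (\<Union>s. L s \<union> (\<Union>a\<in>A s. U s a)) \<le> real ((1 + CARD('b)) * CARD('s)) * e"
proof -
  have e: "e \<ge> 0" using L(2) measure_nonneg order_trans by blast
  have "measure M (\<Union>s. L s \<union> (\<Union>a\<in>A s. U s a)) \<le> (\<Sum>s\<in>UNIV. measure M (L s \<union> (\<Union>a\<in>A s. U s a)))"
    using L U by (intro measure_UNION_le) auto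
  also have "\<dots> \<le> (\<Sum>s::'s\<in>UNIV. (1 + real CARD('b)) * e)"
  proof (rule sum_mono)
    fix s
    have "measure M (L s \<union> (\<Union>a\<in>A s. U s a)) \<le> measure M (L s) + (\<Sum>a\<in>A s. measure M (U s a))"
      using L U by (intro order_trans[OF measure_Un_le] add_left_mono measure_UNION_le) auto
    also have "\<dots> \<le> e + real (card (A s)) * e"
      using L(2)[of s] U(2) sum_mono[of "A s" "\<lambda>a. measure M (U s a)" "\<lambda>_. e"]
      by (simp add: add_mono)
    also have "\<dots> \<le> (1 + real CARD('b)) * e"
      using card_mono[of UNIV "A s"] e by (simp add: distrib_right mult_right_mono)
    finally show "measure M (L s \<union> (\<Union>a\<in>A s. U s a)) \<le> (1 + real CARD('b)) * e" .
  qed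
  finally show ?thesis by (simp add: algebra_simps)
qed

lemma (in irreducible_mdp) LPSM_error_prob_le:
  fixes M :: "'w measure" and X :: "nat \<Rightarrow> 'w \<Rightarrow> 'x" and f :: "'s \<Rightarrow> 'a \<Rightarrow> 'x \<Rightarrow> real"
    and b :: "'w \<Rightarrow> 's \<Rightarrow> 'a"
  defines "\<mu> \<equiv> \<lambda>s a. \<integral>\<omega>. f s a (X 0 \<omega>) \<partial>M"
  assumes M: "prob_space M"
    and X_meas: "\<forall>t. X t \<in> measurable M N"
    and X_indep: "prob_space.indep_vars M (\<lambda>_. N) X UNIV"
    and X_ident: "\<forall>t. distr M N (X t) = distr M N (X 0)"
    and X_supp: "\<forall>t. AE \<omega> in M. X t \<omega> \<in> Xs"
    and f_meas: "\<And>s a. f s a \<in> borel_measurable N"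
    and f_range: "\<And>s a x y. a \<in> Acts s \<Longrightarrow> x \<in> Xs \<Longrightarrow> y \<in> Xs \<Longrightarrow> f s a x - f s a y \<le> B"
    and B: "B > 0"
    and bs: "valid_policy Acts bs"
    and gap: "\<And>\<beta>. valid_policy Acts \<beta> \<Longrightarrow> \<beta> \<noteq> bs \<Longrightarrow> rho P \<beta> \<mu> \<le> rho P bs \<mu> - \<Delta>"
    and \<Delta>: "\<Delta> \<ge> 0"
    and n: "n \<ge> 1"
    and b: "\<And>\<omega>. \<omega> \<in> space M \<Longrightarrow> LPSM_policy Acts P (Theta_emp f X n \<omega>) (b \<omega>)"
  shows "measure M {\<omega>\<in>space M. b \<omega> \<noteq> bs}
           \<le> real ((1 + CARD('a)) * CARD('s)) * exp (- (real n * ((\<Delta> / B)\<^sup>2 / 2)))"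
proof -
  interpret prob_space M by (rule M)
  define e where "e = exp (- (real n * ((\<Delta> / B)\<^sup>2 / 2)))"
  define L where "L s = {\<omega>\<in>space M. Theta_emp f X n \<omega> s (bs s) \<le> \<mu> s (bs s) - \<Delta> / 2}" for s
  define U where "U s a = {\<omega>\<in>space M. Theta_emp f X n \<omega> s a \<ge> \<mu> s a + \<Delta> / 2}" for s a
  have [measurable]: "X t \<in> measurable M N" "f s a \<in> borel_measurable N" for t s a
    using X_meas f_meas by blast+
  have L_sets: "L s \<in> sets M" and U_sets: "U s a \<in> sets M" for s a
    unfolding L_def U_def Theta_emp_def by measurable
  have hoeffding_rate: "exp (-2 * real n * (\<Delta> / 2)\<^sup>2 / B\<^sup>2) = e"
    unfolding e_def by (simp add: power_divide field_simps)
  have "measure M (L s) \<le> e" for s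
    using iid_empirical_mean_deviation(2)[OF M X_meas X_indep X_ident X_supp f_meas
        f_range[of "bs s" s] B n, of "\<Delta> / 2"] bs \<Delta>
    unfolding L_def Theta_emp_def \<mu>_def hoeffding_rate valid_policy_def by simp
  moreover have "measure M (U s a) \<le> e" if "a \<in> Acts s" for s a
    using iid_empirical_mean_deviation(1)[OF M X_meas X_indep X_ident X_supp f_meas
        f_range[OF that] B n, of "\<Delta> / 2"] \<Delta>
    unfolding U_def Theta_emp_def \<mu>_def hoeffding_rate by simp
  ultimately have "measure M (\<Union>s. L s \<union> (\<Union>a\<in>Acts s. U s a)) \<le> real ((1 + CARD('a)) * CARD('s)) * e"
    using L_sets U_sets by (intro measure_UN_state_action_le)
  moreover have "{\<omega>\<in>space M. b \<omega> \<noteq> bs} \<subseteq> (\<Union>s. L s \<union> (\<Union>a\<in>Acts s. U s a))"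
  proof
    fix \<omega> assume "\<omega> \<in> {\<omega>\<in>space M. b \<omega> \<noteq> bs}"
    then have \<omega>: "\<omega> \<in> space M" and b_ne: "b \<omega> \<noteq> bs" by auto
    show "\<omega> \<in> (\<Union>s. L s \<union> (\<Union>a\<in>Acts s. U s a))"
    proof (rule ccontr)
      assume "\<omega> \<notin> (\<Union>s. L s \<union> (\<Union>a\<in>Acts s. U s a))"
      then have "\<mu> s (bs s) - \<Delta> / 2 < Theta_emp f X n \<omega> s (bs s)"
        and "\<And>s a. a \<in> Acts s \<Longrightarrow> Theta_emp f X n \<omega> s a < \<mu> s a + \<Delta> / 2" for s
        using \<omega> unfolding L_def U_def by (auto simp: not_le)
      then show False
        using LPSM_policy_eq_if_estimates_close[OF bs gap _ _ b[OF \<omega>]] b_ne by blast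
    qed
  qed
  ultimately show ?thesis
    unfolding e_def using L_sets U_sets by (meson finite_measure_mono order_trans sets.finite_UN
        sets.Un finite)
qed

lemma sums_exp_neg_Suc:
  fixes c :: real
  assumes "c > 0"
  shows "(\<lambda>t. exp (- (real (Suc t) * c))) sums (1 / (exp c - 1))"
proof -
  have "(\<lambda>t. exp (-c) * exp (-c) ^ t) sums (exp (-c) * (1 / (1 - exp (-c))))"
    using assms by (intro sums_mult geometric_sums) simp
  moreover have "exp (-c) * exp (-c) ^ t = exp (- (real (Suc t) * c))" for t
    by (simp add: exp_of_nat_mult[symmetric] exp_add[symmetric] algebra_simps)
  moreover have "exp (-c) * (1 / (1 - exp (-c))) = 1 / (exp c - 1)"
    using assms by (simp add: exp_minus field_simps)
  ultimately show ?thesis by simp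
qed

lemma (in prob_space) expected_count_le_geometric:
  assumes E: "\<And>t. E t \<in> sets M"
    and bound: "\<And>t. measure M (E t) \<le> K * exp (- (real (Suc t) * c))"
    and K: "K > 0" and c: "c \<ge> 0"
  shows "(\<integral>\<^sup>+\<omega>. (1 + (\<Sum>t. indicator (E t) \<omega>)) \<partial>M) \<le> 1 + ennreal K / ennreal (exp c - 1)"
proof (cases "c = 0")
  case True
  then show ?thesis using K by (simp add: ennreal_divide_zero)
next
  case False
  then have c: "c > 0" using c by simp
  have geom: "(\<lambda>t. K * exp (- (real (Suc t) * c))) sums (K / (exp c - 1))"
    using sums_mult[OF sums_exp_neg_Suc[OF c], of K] by simp
  have "(\<integral>\<^sup>+\<omega>. (1 + (\<Sum>t. indicator (E t) \<omega>)) \<partial>M) = 1 + (\<Sum>t. emeasure M (E t))"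
    using E by (simp add: nn_integral_add nn_integral_suminf emeasure_space_1)
  also have "(\<Sum>t. emeasure M (E t)) \<le> (\<Sum>t. ennreal (K * exp (- (real (Suc t) * c))))"
    using bound by (intro suminf_le) (auto simp: emeasure_eq_measure intro: ennreal_leI)
  also have "\<dots> = ennreal (K / (exp c - 1))"
    using geom K by (subst suminf_ennreal2) (auto simp: sums_iff)
  also have "\<dots> = ennreal K / ennreal (exp c - 1)"
    using K c by (intro divide_ennreal[symmetric]) auto
  finally show ?thesis by (simp add: add_left_mono)
qed

theorem theorem1:
  fixes Acts :: "'s::finite \<Rightarrow> 'a::finite set"
    and P :: "'s \<Rightarrow> 'a \<Rightarrow> 's \<Rightarrow> real"
    and M :: "'w measure" and N :: "'x measure"
    and X :: "nat \<Rightarrow> 'w \<Rightarrow> 'x" and Xs :: "'x set"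
    and f :: "'s \<Rightarrow> 'a \<Rightarrow> 'x \<Rightarrow> real" and B :: "'s \<Rightarrow> 'a \<Rightarrow> real"
    and beta :: "nat \<Rightarrow> 'w \<Rightarrow> 's \<Rightarrow> 'a" and bstar :: "'s \<Rightarrow> 'a"
  defines "Mu \<equiv> (\<lambda>s a. \<integral>\<omega>. f s a (X 0 \<omega>) \<partial>M)"
    and "B0 \<equiv> Max {B s a | s a. a \<in> Acts s}"
    and "Delta1 \<equiv> rho P bstar (\<lambda>s a. \<integral>\<omega>. f s a (X 0 \<omega>) \<partial>M)
              - Max {rho P \<beta> (\<lambda>s a. \<integral>\<omega>. f s a (X 0 \<omega>) \<partial>M) | \<beta>. valid_policy Acts \<beta> \<and> \<beta> \<noteq> bstar}"
  assumes M: "prob_space M"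
    and Acts_ne: "\<forall>s. Acts s \<noteq> {}"
    and P_nonneg: "\<forall>s a s'. P s a s' \<ge> 0"
    and P_sum: "\<forall>s. \<forall>a\<in>Acts s. (\<Sum>s'\<in>UNIV. P s a s') = 1"
    and ergodic: "\<forall>\<beta>. valid_policy Acts \<beta> \<longrightarrow>
                    irreducible_chain (chain_of P \<beta>) \<and> aperiodic_chain (chain_of P \<beta>)"
    and X_meas: "\<forall>t. X t \<in> measurable M N"
    and X_indep: "prob_space.indep_vars M (\<lambda>_. N) X UNIV"
    and X_ident: "\<forall>t. distr M N (X t) = distr M N (X 0)"
    and X_supp: "\<forall>t. AE \<omega> in M. X t \<omega> \<in> Xs"
    and f_meas: "\<forall>s a. f s a \<in> borel_measurable N"
    and B_bound: "\<forall>s. \<forall>a\<in>Acts s. \<forall>x\<in>Xs. \<forall>y\<in>Xs. f s a x - f s a y \<le> B s a"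
    and B0_pos: "B0 > 0"
    and bstar_valid: "valid_policy Acts bstar"
    and bstar_opt: "\<forall>\<beta>. valid_policy Acts \<beta> \<longrightarrow> rho P \<beta> Mu \<le> rho P bstar Mu"
    and other_policy: "\<exists>\<beta>. valid_policy Acts \<beta> \<and> \<beta> \<noteq> bstar"
    and LPSM: "\<forall>n\<ge>1. \<forall>\<omega>\<in>space M. LPSM_policy Acts P (Theta_emp f X n \<omega>) (beta n \<omega>)"
    and beta_meas: "\<forall>n. {\<omega>\<in>space M. beta n \<omega> \<noteq> bstar} \<in> sets M"
  shows "(\<integral>\<^sup>+\<omega>. (1 + (\<Sum>t. indicator {\<omega>\<in>space M. beta (Suc t) \<omega> \<noteq> bstar} \<omega>)) \<partial>M)
         \<le> 1 + ennreal (real ((1 + CARD('a)) * CARD('s)))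
               / ennreal (exp ((Delta1 / B0)\<^sup>2 / 2) - 1)"
proof -
  interpret irreducible_mdp Acts P
    using P_nonneg P_sum ergodic by unfold_locales auto
  interpret prob_space M by (rule M)
  define others where "others = {rho P \<beta> Mu | \<beta>. valid_policy Acts \<beta> \<and> \<beta> \<noteq> bstar}"
  have others: "finite others" "others \<noteq> {}"
    unfolding others_def using other_policy by (simp_all add: finite_image_set)
  have Delta1: "Delta1 = rho P bstar Mu - Max others"
    unfolding Delta1_def others_def Mu_def ..
  have gap: "rho P \<beta> Mu \<le> rho P bstar Mu - Delta1" if "valid_policy Acts \<beta>" "\<beta> \<noteq> bstar" for \<beta>
  proof -
    have "rho P \<beta> Mu \<in> others" using that unfolding others_def by blast
    then show ?thesis using Max_ge[OF others(1)] unfolding Delta1 by simp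
  qed
  have "Delta1 \<ge> 0"
    using Max_in[OF others] bstar_opt unfolding Delta1 others_def by auto
  have "finite {B s a | s a. a \<in> Acts s}"
    by (rule finite_subset[of _ "range (case_prod B)"]) auto
  then have B_le: "B s a \<le> B0" if "a \<in> Acts s" for s a
    unfolding B0_def using that by (intro Max_ge) auto
  have f_range: "f s a x - f s a y \<le> B0" if "a \<in> Acts s" "x \<in> Xs" "y \<in> Xs" for s a x y
    using B_bound that B_le[OF that(1)] by (meson order_trans)
  have "measure M {\<omega>\<in>space M. beta (Suc t) \<omega> \<noteq> bstar}
      \<le> real ((1 + CARD('a)) * CARD('s)) * exp (- (real (Suc t) * ((Delta1 / B0)\<^sup>2 / 2)))" for t
  proof (rule LPSM_error_prob_le[OF M X_meas X_indep X_ident X_supp _ f_range B0_pos bstar_valid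
        gap[unfolded Mu_def] \<open>Delta1 \<ge> 0\<close>])
    show "f s a \<in> borel_measurable N" for s a using f_meas by blast
    show "LPSM_policy Acts P (Theta_emp f X (Suc t) \<omega>) (beta (Suc t) \<omega>)" if "\<omega> \<in> space M" for \<omega>
      using LPSM[rule_format, of "Suc t"] that by simp
  qed simp_all
  then show ?thesis
    by (rule expected_count_le_geometric[OF beta_meas[rule_format]]) (simp_all add: add_pos_nonneg)
qed

end
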